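(* In the setting described in the context, let $(\hat{\boldsymbol\beta},\hat\alpha,\hat{\boldsymbol z},\hat{\boldsymbol l})$ be an optimal solution of the restricted problem (R$_T$), with optimal value $\widehat{\mathsf{Obj}}_{T+1}$. Then (1) $\widehat{\mathsf{Obj}}_{T+1}\le\mathsf{Obj}$; and (2) if $S(\hat{\boldsymbol\beta})=S(\boldsymbol\beta^{(t)})$ for some $t\in[T]$, then $(\hat{\boldsymbol\beta},\hat\alpha,\hat{\boldsymbol z},\hat{\boldsymbol l})$ is also an optimal solution of (MIP$_M$).
   Context: Let $\boldsymbol y\in\mathbb R^n$, $\boldsymbol X\in\mathbb R^{n\times p}$, $\lambda,\lambda_0\ge0$, $M>0$. The columns are partitioned into categorical blocks $\mathcal I_j=\{s_j,\dots,s_j+p_j-1\}$, $j\in[q]$, and possibly further continuous columns. Problem (MIP$_M$): minimise $\frac1n\|\boldsymbol y-\boldsymbol X\boldsymbol\beta-\alpha\mathbf 1\|_2^2+\lambda_0\sum_{i=1}^pz_i+\lambda\sum_{i=1}^pl_i$ over $\boldsymbol\beta\in\mathbb R^p,\alpha\in\mathbb R$, $z_i,l_i\in\{0,1\}$ ($i\in[p]$), $z^j_{i,k}\in\{0,1\}$ ($j\in[q]$, $s_j\le k<i\le s_j+p_j-1$), subject to $|\beta_i|\le Mz_i$ ($i\in[p]$); $|\beta_k-\beta_i|\le2Mz^j_{i,k}$ ($j\in[q]$, $s_j\le k\le i-1$, $s_j\le i\le s_j+p_j-1$); and $\sum_{k=s_j}^{i-1}z^j_{i,k}-(i-s_j-1)\le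 l_i$ ($j\in[q]$, $s_j\le i\le s_j+p_j-1$). Its optimal value is $\mathsf{Obj}$. Let $\boldsymbol\beta^{(1)},\dots,\boldsymbol\beta^{(T)}$ be the $\boldsymbol\beta$-parts of $T\ge1$ feasible solutions of (MIP$_M$), and $S_t=\{j\in[q]:\beta^{(t)}_i\ne0\text{ for some }i\in\mathcal I_j\}$. The restricted problem (R$_T$) is (MIP$_M$) with the constraints $|\beta_k-\beta_i|\le2Mz^j_{i,k}$ imposed only for $j\in\bigcup_{t\in[T]}S_t$ (all other constraints kept). $S(\boldsymbol\beta)=\{i:\beta_i\ne0\}$ is the support. *)

theory Defs
  imports Main "HOL.Real"
begin

text \<open>Indices are 1-based as in the paper: observations r in {1..n}, columns i in {1..p},
  categorical blocks j in {1..q}; block j is {s j .. s j + pj j - 1}.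
  Vectors are functions nat => real (only values at in-range indices matter).
  The pairwise variables z^j_{i,k} are zz j i k.\<close>

definition block :: "(nat \<Rightarrow> nat) \<Rightarrow> (nat \<Rightarrow> nat) \<Rightarrow> nat \<Rightarrow> nat set" where
  "block s pj j = {s j ..< s j + pj j}"

definition objective ::
  "nat \<Rightarrow> nat \<Rightarrow> (nat \<Rightarrow> real) \<Rightarrow> (nat \<Rightarrow> nat \<Rightarrow> real) \<Rightarrow> real \<Rightarrow> real
   \<Rightarrow> (nat \<Rightarrow> real) \<Rightarrow> real \<Rightarrow> (nat \<Rightarrow> real) \<Rightarrow> (nat \<Rightarrow> real) \<Rightarrow> real" where
  "objective n p y X lam0 lam \<beta> \<alpha> z l =
     (1 / real n) * (\<Sum>r\<in>{1..n}. (y r - (\<Sum>i\<in>{1..p}. X r i * \<beta> i) - \<alpha>)\<^sup>2)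
     + lam0 * (\<Sum>i\<in>{1..p}. z i) + lam * (\<Sum>i\<in>{1..p}. l i)"

text \<open>Feasibility, where the pairwise constraints |beta_k - beta_i| <= 2 M z^j_{i,k}
  are imposed only for blocks j in J (J = {1..q} gives (MIP_M)).\<close>

definition feasible ::
  "nat \<Rightarrow> nat \<Rightarrow> (nat \<Rightarrow> nat) \<Rightarrow> (nat \<Rightarrow> nat) \<Rightarrow> real \<Rightarrow> nat set
   \<Rightarrow> (nat \<Rightarrow> real) \<Rightarrow> real \<Rightarrow> (nat \<Rightarrow> real) \<Rightarrow> (nat \<Rightarrow> real)
   \<Rightarrow> (nat \<Rightarrow> nat \<Rightarrow> nat \<Rightarrow> real) \<Rightarrow> bool" where
  "feasible p q s pj M J \<beta> \<alpha> z l zz \<longleftrightarrow>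
     (\<forall>i\<in>{1..p}. z i \<in> {0, 1} \<and> l i \<in> {0, 1}) \<and>
     (\<forall>j\<in>{1..q}. \<forall>i k. s j \<le> k \<and> k < i \<and> i \<le> s j + pj j - 1 \<longrightarrow> zz j i k \<in> {0, 1}) \<and>
     (\<forall>i\<in>{1..p}. \<bar>\<beta> i\<bar> \<le> M * z i) \<and>
     (\<forall>j\<in>{1..q}. j \<in> J \<longrightarrow> (\<forall>i k. s j \<le> k \<and> k \<le> i - 1 \<and> s j \<le> i \<and> i \<le> s j + pj j - 1
          \<longrightarrow> \<bar>\<beta> k - \<beta> i\<bar> \<le> 2 * M * zz j i k)) \<and>
     (\<forall>j\<in>{1..q}. \<forall>i. s j \<le> i \<and> i \<le> s j + pj j - 1 \<longrightarrow>
          (\<Sum>k\<in>{s j ..< i}. zz j i k) - (real i - real (s j) - 1) \<le> l i)"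

definition active_blocks :: "nat \<Rightarrow> (nat \<Rightarrow> nat) \<Rightarrow> (nat \<Rightarrow> nat) \<Rightarrow> (nat \<Rightarrow> real) \<Rightarrow> nat set" where
  "active_blocks q s pj \<beta> = {j \<in> {1..q}. \<exists>i\<in>block s pj j. \<beta> i \<noteq> 0}"

definition support :: "nat \<Rightarrow> (nat \<Rightarrow> real) \<Rightarrow> nat set" where
  "support p \<beta> = {i \<in> {1..p}. \<beta> i \<noteq> 0}"

definition opt_value ::
  "nat \<Rightarrow> nat \<Rightarrow> (nat \<Rightarrow> real) \<Rightarrow> (nat \<Rightarrow> nat \<Rightarrow> real) \<Rightarrow> real \<Rightarrow> real
   \<Rightarrow> nat \<Rightarrow> (nat \<Rightarrow> nat) \<Rightarrow> (nat \<Rightarrow> nat) \<Rightarrow> real \<Rightarrow> nat set \<Rightarrow> real" where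
  "opt_value n p y X lam0 lam q s pj M J =
     Inf {objective n p y X lam0 lam \<beta> \<alpha> z l | \<beta> \<alpha> z l zz. feasible p q s pj M J \<beta> \<alpha> z l zz}"

definition optimal ::
  "nat \<Rightarrow> nat \<Rightarrow> (nat \<Rightarrow> real) \<Rightarrow> (nat \<Rightarrow> nat \<Rightarrow> real) \<Rightarrow> real \<Rightarrow> real
   \<Rightarrow> nat \<Rightarrow> (nat \<Rightarrow> nat) \<Rightarrow> (nat \<Rightarrow> nat) \<Rightarrow> real \<Rightarrow> nat set
   \<Rightarrow> (nat \<Rightarrow> real) \<Rightarrow> real \<Rightarrow> (nat \<Rightarrow> real) \<Rightarrow> (nat \<Rightarrow> real)
   \<Rightarrow> (nat \<Rightarrow> nat \<Rightarrow> nat \<Rightarrow> real) \<Rightarrow> bool" where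
  "optimal n p y X lam0 lam q s pj M J \<beta> \<alpha> z l zz \<longleftrightarrow>
     feasible p q s pj M J \<beta> \<alpha> z l zz \<and>
     (\<forall>\<beta>' \<alpha>' z' l' zz'. feasible p q s pj M J \<beta>' \<alpha>' z' l' zz' \<longrightarrow>
        objective n p y X lam0 lam \<beta> \<alpha> z l \<le> objective n p y X lam0 lam \<beta>' \<alpha>' z' l')"

end

theory Submission
  imports Defs
begin

text \<open>Dropping pairwise constraints relaxes the problem, so an optimum of the restricted
  problem is a lower bound for the full one. Conversely, the pairwise constraints of a block on
  which \<open>\<beta>\<close> vanishes hold for any nonnegative pairwise variables, and which blocks are active
  depends only on the support. So if \<open>\<beta>\<close>-hat has the support of some \<open>\<beta>\<^sup>(\<^sup>t\<^sup>)\<close>, its active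
  blocks are all restricted ones, it is feasible for the full problem, and being optimal for a
  relaxation it is optimal there.\<close>

lemma feasible_anti_mono:
  assumes "feasible p q s pj M J \<beta> \<alpha> z l zz" and "J' \<subseteq> J"
  shows "feasible p q s pj M J' \<beta> \<alpha> z l zz"
  using assms unfolding feasible_def by blast

lemma optimal_relaxation_le_opt_value:
  assumes opt: "optimal n p y X lam0 lam q s pj M J' \<beta> \<alpha> z l zz" and "J' \<subseteq> J"
    and feas: "feasible p q s pj M J \<beta>' \<alpha>' z' l' zz'"
  shows "objective n p y X lam0 lam \<beta> \<alpha> z l \<le> opt_value n p y X lam0 lam q s pj M J"
  unfolding opt_value_def
proof (rule cInf_greatest)
  show "{objective n p y X lam0 lam \<beta> \<alpha> z l | \<beta> \<alpha> z l zz. feasible p q s pj M J \<beta> \<alpha> z l zz} \<noteq> {}"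
    using feas by blast
next
  fix v
  assume "v \<in> {objective n p y X lam0 lam \<beta> \<alpha> z l | \<beta> \<alpha> z l zz. feasible p q s pj M J \<beta> \<alpha> z l zz}"
  then show "objective n p y X lam0 lam \<beta> \<alpha> z l \<le> v"
    using opt feasible_anti_mono[OF _ \<open>J' \<subseteq> J\<close>] unfolding optimal_def by blast
qed

lemma optimal_of_relaxation:
  assumes "optimal n p y X lam0 lam q s pj M J' \<beta> \<alpha> z l zz" and "J' \<subseteq> J"
    and "feasible p q s pj M J \<beta> \<alpha> z l zz"
  shows "optimal n p y X lam0 lam q s pj M J \<beta> \<alpha> z l zz"
  using assms feasible_anti_mono[OF _ \<open>J' \<subseteq> J\<close>] unfolding optimal_def by blast

lemma active_blocks_cong_support:
  assumes "\<forall>j\<in>{1..q}. block s pj j \<subseteq> {1..p}" and "support p \<beta> = support p \<beta>'"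
  shows "active_blocks q s pj \<beta> = active_blocks q s pj \<beta>'"
proof -
  have "\<beta> i \<noteq> 0 \<longleftrightarrow> \<beta>' i \<noteq> 0" if "i \<in> {1..p}" for i
    using assms(2) that unfolding support_def by blast
  then show ?thesis
    using assms(1) unfolding active_blocks_def by blast
qed

lemma feasible_if_active_blocks_subset:
  assumes feas: "feasible p q s pj M J \<beta> \<alpha> z l zz"
    and active: "active_blocks q s pj \<beta> \<subseteq> J"
    and starts: "\<forall>j\<in>{1..q}. 1 \<le> s j" and "M \<ge> 0"
  shows "feasible p q s pj M J' \<beta> \<alpha> z l zz"
proof -
  have "\<bar>\<beta> k - \<beta> i\<bar> \<le> 2 * M * zz j i k"
    if j: "j \<in> {1..q}" "j \<notin> J" and range: "s j \<le> k" "k \<le> i - 1" "s j \<le> i" "i \<le> s j + pj j - 1"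
    for j i k
  proof -
    \<comment> \<open>\<open>s j \<ge> 1\<close> makes the truncated \<open>k \<le> i - 1\<close> mean \<open>k < i\<close>; for \<open>k = i\<close>, \<open>zz j i i\<close> is unconstrained.\<close>
    have "1 \<le> s j" using starts j(1) by blast
    then have "k < i" and "k \<in> block s pj j" and "i \<in> block s pj j"
      using range unfolding block_def by auto
    then have "\<beta> k = 0" and "\<beta> i = 0"
      using active j unfolding active_blocks_def by blast+
    moreover have "zz j i k \<ge> 0"
      using feas j(1) range \<open>k < i\<close> unfolding feasible_def by fastforce
    ultimately show ?thesis using \<open>M \<ge> 0\<close> by simp
  qed
  moreover have "\<forall>j\<in>{1..q}. j \<in> J \<longrightarrow> (\<forall>i k. s j \<le> k \<and> k \<le> i - 1 \<and> s j \<le> i \<and> i \<le> s j + pj j - 1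
      \<longrightarrow> \<bar>\<beta> k - \<beta> i\<bar> \<le> 2 * M * zz j i k)"
    using feas unfolding feasible_def by (elim conjE)
  ultimately have "\<forall>j\<in>{1..q}. j \<in> J' \<longrightarrow> (\<forall>i k. s j \<le> k \<and> k \<le> i - 1 \<and> s j \<le> i \<and> i \<le> s j + pj j - 1
      \<longrightarrow> \<bar>\<beta> k - \<beta> i\<bar> \<le> 2 * M * zz j i k)"
    by blast
  with feas show ?thesis
    unfolding feasible_def by (elim conjE) (intro conjI)
qed

theorem proposition3:
  fixes n p q T :: nat
    and y :: "nat \<Rightarrow> real" and X :: "nat \<Rightarrow> nat \<Rightarrow> real"
    and lam0 lam M :: real
    and s pj :: "nat \<Rightarrow> nat"
    and \<beta>s :: "nat \<Rightarrow> nat \<Rightarrow> real"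
    and \<beta>h :: "nat \<Rightarrow> real" and \<alpha>h :: real and zh lh :: "nat \<Rightarrow> real"
    and zzh :: "nat \<Rightarrow> nat \<Rightarrow> nat \<Rightarrow> real"
  assumes lam_nonneg: "lam \<ge> 0" and lam0_nonneg: "lam0 \<ge> 0" and M_pos: "M > 0"
    and blocks_valid: "\<forall>j\<in>{1..q}. 1 \<le> s j \<and> 1 \<le> pj j \<and> s j + pj j - 1 \<le> p"
    and blocks_disjoint: "\<forall>j\<in>{1..q}. \<forall>j'\<in>{1..q}. j \<noteq> j' \<longrightarrow> block s pj j \<inter> block s pj j' = {}"
    and T_pos: "T \<ge> 1"
    and sols_feasible: "\<forall>t\<in>{1..T}. \<exists>\<alpha> z l zz. feasible p q s pj M {1..q} (\<beta>s t) \<alpha> z l zz"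
    and hat_optimal: "optimal n p y X lam0 lam q s pj M
                        (\<Union>t\<in>{1..T}. active_blocks q s pj (\<beta>s t)) \<beta>h \<alpha>h zh lh zzh"
  shows "objective n p y X lam0 lam \<beta>h \<alpha>h zh lh
           \<le> opt_value n p y X lam0 lam q s pj M {1..q}
         \<and> ((\<exists>t\<in>{1..T}. support p \<beta>h = support p (\<beta>s t))
              \<longrightarrow> optimal n p y X lam0 lam q s pj M {1..q} \<beta>h \<alpha>h zh lh zzh)"
proof (intro conjI impI)
  let ?J = "\<Union>t\<in>{1..T}. active_blocks q s pj (\<beta>s t)"
  have J_sub: "?J \<subseteq> {1..q}" unfolding active_blocks_def by auto
  have "1 \<in> {1..T}" using T_pos by simp
  then obtain \<alpha> z l zz where "feasible p q s pj M {1..q} (\<beta>s 1) \<alpha> z l zz"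
    using sols_feasible by blast
  then show "objective n p y X lam0 lam \<beta>h \<alpha>h zh lh \<le> opt_value n p y X lam0 lam q s pj M {1..q}"
    by (rule optimal_relaxation_le_opt_value[OF hat_optimal J_sub])
  assume "\<exists>t\<in>{1..T}. support p \<beta>h = support p (\<beta>s t)"
  then obtain t where t: "t \<in> {1..T}" and same_support: "support p \<beta>h = support p (\<beta>s t)" ..
  have "\<forall>j\<in>{1..q}. block s pj j \<subseteq> {1..p}"
    using blocks_valid unfolding block_def by fastforce
  then have "active_blocks q s pj \<beta>h = active_blocks q s pj (\<beta>s t)"
    using same_support by (rule active_blocks_cong_support)
  then have active: "active_blocks q s pj \<beta>h \<subseteq> ?J"
    using t by blast
  have hat_feasible: "feasible p q s pj M ?J \<beta>h \<alpha>h zh lh zzh"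
    using hat_optimal unfolding optimal_def by blast
  have starts: "\<forall>j\<in>{1..q}. 1 \<le> s j" using blocks_valid by blast
  have "feasible p q s pj M {1..q} \<beta>h \<alpha>h zh lh zzh"
    using feasible_if_active_blocks_subset[OF hat_feasible active starts] M_pos by simp
  then show "optimal n p y X lam0 lam q s pj M {1..q} \<beta>h \<alpha>h zh lh zzh"
    by (rule optimal_of_relaxation[OF hat_optimal J_sub])
qed

end
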